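(* Let $k=\mathbb R$ or $\mathbb C$, let $(V,g)$ be an inner product vector space over $k$, let $f\in\operatorname{End}_k(V)$, and let $\mathcal H_f=\{H_i\}_{i\in I}$ be a family of finite-dimensional $f$-invariant subspaces with $V=\bigoplus_{i\in I}H_i$ and $H_i\subseteq\big[\sum_{j\ne i}H_j\big]^\perp$ for every $i\in I$. Then $f$ is admissible for the Moore-Penrose inverse and $f^+_{\mathcal H_f}=f^\dagger$.
   Context: An inner product is linear in the first argument, conjugate-symmetric and positive definite; $U^\perp=\{v\in V:g(u,v)=0\ \forall u\in U\}$. $V=\bigoplus_{i\in I}H_i$ means the natural map $\bigoplus H_i\to V$ is an isomorphism. $f$ is admissible for the Moore-Penrose inverse if $V=\operatorname{Ker} f\oplus[\operatorname{Ker} f]^\perp=\operatorname{Im} f\oplus[\operatorname{Im} f]^\perp$; its Moore-Penrose inverse $f^\dagger$ is then the linear map equal to $(f|_{[\operatorname{Ker} f]^\perp})^{-1}$ on $\operatorname{Im} f$ and $0$ on $[\operatorname{Im} f]^\perp$. Writing $f_i=f|_{H_i}\in\operatorname{End}_k(H_i)$ (with $H_i$ carrying the restricted inner product), $f_i^\dagger$ denotes its (finite-dimensional) Moore-Penrose inverse, and $f^+_{\mathcal H_f}$ is the unique linear endomorphism of $V$ with $f^+_{\mathcal H_f}|_{H_i}=f_i^\dagger$ for all $i\in I$. *)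

theory Defs
  imports Complex_Main
begin

text \<open>Everything is stated for a scalar field 'k (instantiated with real and with complex),
  an abstract vector space 'v with scalar multiplication smul (locale vector_space),
  a conjugation map cnj on the scalars (identity for real, cnj for complex),
  and a sesquilinear form g.\<close>

definition inner_product ::
  "('k::real_field \<Rightarrow> 'v::ab_group_add \<Rightarrow> 'v) \<Rightarrow> ('k \<Rightarrow> 'k) \<Rightarrow> ('v \<Rightarrow> 'v \<Rightarrow> 'k) \<Rightarrow> bool" where
  "inner_product smul cnj' g \<longleftrightarrow>
     vector_space smul \<and>
     (\<forall>u v w. g (u + v) w = g u w + g v w) \<and>
     (\<forall>a u v. g (smul a u) v = a * g u v) \<and>
     (\<forall>u v. g v u = cnj' (g u v)) \<and>
     (\<forall>v. v \<noteq> 0 \<longrightarrow> (\<exists>r::real. r > 0 \<and> g v v = of_real r))"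

text \<open>Linear maps on a subset W (intended to be a subspace); for W = UNIV this is End_k(V).\<close>
definition linear_on :: "('k \<Rightarrow> 'v::ab_group_add \<Rightarrow> 'v) \<Rightarrow> 'v set \<Rightarrow> ('v \<Rightarrow> 'v) \<Rightarrow> bool" where
  "linear_on smul W f \<longleftrightarrow>
     (\<forall>x\<in>W. \<forall>y\<in>W. f (x + y) = f x + f y) \<and> (\<forall>a. \<forall>x\<in>W. f (smul a x) = smul a (f x))"

definition fin_dim_subspace :: "('k::field \<Rightarrow> 'v::ab_group_add \<Rightarrow> 'v) \<Rightarrow> 'v set \<Rightarrow> bool" where
  "fin_dim_subspace smul H \<longleftrightarrow> (\<exists>B. finite B \<and> H = module.span smul B)"

definition perp_in :: "('v \<Rightarrow> 'v \<Rightarrow> 'k::zero) \<Rightarrow> 'v set \<Rightarrow> 'v set \<Rightarrow> 'v set" where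
  "perp_in g W U = {v \<in> W. \<forall>u\<in>U. g u v = 0}"

definition direct_sum2 :: "'v::ab_group_add set \<Rightarrow> 'v set \<Rightarrow> 'v set \<Rightarrow> bool" where
  "direct_sum2 W A B \<longleftrightarrow> (\<forall>v\<in>W. \<exists>!p. fst p \<in> A \<and> snd p \<in> B \<and> v = fst p + snd p)"

text \<open>V (= UNIV) is the internal direct sum of the family H_i, i in I: the natural map from
  the external direct sum (finitely supported families h with h i in H i) to V is bijective.\<close>
definition internal_direct_sum :: "'i set \<Rightarrow> ('i \<Rightarrow> 'v::comm_monoid_add set) \<Rightarrow> bool" where
  "internal_direct_sum I H \<longleftrightarrow>
     (\<forall>v. \<exists>!h. (\<forall>i\<in>I. h i \<in> H i) \<and> (\<forall>i. i \<notin> I \<longrightarrow> h i = 0) \<and>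
              finite {i. h i \<noteq> 0} \<and> v = sum h {i. h i \<noteq> 0})"

definition subspace_sum :: "'i set \<Rightarrow> ('i \<Rightarrow> 'v::comm_monoid_add set) \<Rightarrow> 'v set" where
  "subspace_sum J H = {v. \<exists>F h. finite F \<and> F \<subseteq> J \<and> (\<forall>j\<in>F. h j \<in> H j) \<and> v = sum h F}"

definition admissible_on :: "('v \<Rightarrow> 'v \<Rightarrow> 'k::zero) \<Rightarrow> 'v::ab_group_add set \<Rightarrow> ('v \<Rightarrow> 'v) \<Rightarrow> bool" where
  "admissible_on g W f \<longleftrightarrow>
     direct_sum2 W {v\<in>W. f v = 0} (perp_in g W {v\<in>W. f v = 0}) \<and>
     direct_sum2 W (f ` W) (perp_in g W (f ` W))"

definition is_MP_inverse_on ::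
  "('k \<Rightarrow> 'v \<Rightarrow> 'v) \<Rightarrow> ('v \<Rightarrow> 'v \<Rightarrow> 'k::zero) \<Rightarrow> 'v::ab_group_add set \<Rightarrow> ('v \<Rightarrow> 'v) \<Rightarrow> ('v \<Rightarrow> 'v) \<Rightarrow> bool" where
  "is_MP_inverse_on smul g W f f' \<longleftrightarrow>
     admissible_on g W f \<and> linear_on smul W f' \<and> f' ` W \<subseteq> W \<and>
     (\<forall>y\<in>f ` W. f' y \<in> perp_in g W {v\<in>W. f v = 0} \<and> f (f' y) = y) \<and>
     (\<forall>y\<in>perp_in g W (f ` W). f' y = 0)"

definition MP_inv ::
  "('k \<Rightarrow> 'v \<Rightarrow> 'v) \<Rightarrow> ('v \<Rightarrow> 'v \<Rightarrow> 'k::zero) \<Rightarrow> 'v::ab_group_add set \<Rightarrow> ('v \<Rightarrow> 'v) \<Rightarrow> ('v \<Rightarrow> 'v)" where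
  "MP_inv smul g W f = (THE f'. is_MP_inverse_on smul g W f f' \<and> (\<forall>x. x \<notin> W \<longrightarrow> f' x = 0))"

definition MP_plus ::
  "('k \<Rightarrow> 'v \<Rightarrow> 'v) \<Rightarrow> ('v \<Rightarrow> 'v \<Rightarrow> 'k::zero) \<Rightarrow> 'i set \<Rightarrow> ('i \<Rightarrow> 'v::ab_group_add set) \<Rightarrow> ('v \<Rightarrow> 'v) \<Rightarrow> ('v \<Rightarrow> 'v)" where
  "MP_plus smul g I H f = (THE fp. linear_on smul UNIV fp \<and>
      (\<forall>i\<in>I. \<forall>x\<in>H i. fp x = MP_inv smul g (H i) f x))"

definition cor_hyps ::
  "('k::real_field \<Rightarrow> 'v::ab_group_add \<Rightarrow> 'v) \<Rightarrow> ('k \<Rightarrow> 'k) \<Rightarrow> ('v \<Rightarrow> 'v \<Rightarrow> 'k) \<Rightarrow> ('v \<Rightarrow> 'v)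
    \<Rightarrow> 'i set \<Rightarrow> ('i \<Rightarrow> 'v set) \<Rightarrow> bool" where
  "cor_hyps smul cnj' g f I H \<longleftrightarrow>
     inner_product smul cnj' g \<and>
     linear_on smul UNIV f \<and>
     (\<forall>i\<in>I. fin_dim_subspace smul (H i) \<and> f ` H i \<subseteq> H i) \<and>
     internal_direct_sum I H \<and>
     (\<forall>i\<in>I. H i \<subseteq> perp_in g UNIV (subspace_sum (I - {i}) H))"

definition cor_concl ::
  "('k \<Rightarrow> 'v::ab_group_add \<Rightarrow> 'v) \<Rightarrow> ('v \<Rightarrow> 'v \<Rightarrow> 'k::zero) \<Rightarrow> ('v \<Rightarrow> 'v)
    \<Rightarrow> 'i set \<Rightarrow> ('i \<Rightarrow> 'v set) \<Rightarrow> bool" where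
  "cor_concl smul g f I H \<longleftrightarrow>
     admissible_on g UNIV f \<and> MP_plus smul g I H f = MP_inv smul g UNIV f"

end

theory Submission
  imports Defs
begin

(* Each H_i is finite-dimensional, so Gram-Schmidt splits it orthogonally as
   Ker(f|H_i) + its complement in H_i, and as f(H_i) + its complement in H_i.
   Because the H_i are f-invariant and mutually orthogonal, Ker f and Im f are the sums of
   these local pieces and every local complement is orthogonal to all of Ker f resp. Im f;
   summing the local splittings shows that f is admissible.
   For admissible f, f^dagger v is the unique x orthogonal to Ker f with v - f x orthogonal
   to Im f.  For v in H_i the local inverse f_i^dagger v is such an x, so f^dagger agrees with
   f_i^dagger on every H_i, i.e. f^dagger = f^+. *)

lemma direct_sum2E:
  assumes "direct_sum2 W A B" and "v \<in> W"
  obtains a b where "a \<in> A" "b \<in> B" "v = a + b"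
proof -
  obtain p where "fst p \<in> A" "snd p \<in> B" "v = fst p + snd p"
    using assms unfolding direct_sum2_def by blast
  then show thesis by (rule that)
qed

lemma subspace_sumI:
  assumes "finite G" "G \<subseteq> J" "\<And>j. j \<in> G \<Longrightarrow> w j \<in> P j"
  shows "sum w G \<in> subspace_sum J P"
  using assms unfolding subspace_sum_def by blast

lemma subspace_sumE:
  assumes "v \<in> subspace_sum J P"
  obtains G w where "finite G" "G \<subseteq> J" "\<And>j. j \<in> G \<Longrightarrow> w j \<in> P j" "v = sum w G"
  using assms unfolding subspace_sum_def by blast

context vector_space
begin

lemma linear_on_UNIV_iff: "linear_on scale UNIV F \<longleftrightarrow> Vector_Spaces.linear scale scale F"
  unfolding linear_on_def Vector_Spaces.linear_iff using vector_space_axioms by blast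

lemma direct_sum2I:
  assumes "subspace A" "subspace B" "\<And>x. x \<in> A \<Longrightarrow> x \<in> B \<Longrightarrow> x = 0"
    and "\<And>v. v \<in> W \<Longrightarrow> \<exists>a\<in>A. \<exists>b\<in>B. v = a + b"
  shows "direct_sum2 W A B"
  unfolding direct_sum2_def
proof
  fix v assume "v \<in> W"
  then obtain a b where ab: "a \<in> A" "b \<in> B" "v = a + b" using assms(4) by blast
  show "\<exists>!p. fst p \<in> A \<and> snd p \<in> B \<and> v = fst p + snd p"
  proof (rule ex1I[of _ "(a, b)"])
    fix p assume p: "fst p \<in> A \<and> snd p \<in> B \<and> v = fst p + snd p"
    then have "fst p = v - snd p" "a = v - b"
      using ab(3) by (simp_all add: eq_diff_eq)
    then have diff: "fst p - a = b - snd p" by (simp add: algebra_simps)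
    have "fst p - a \<in> A"
      using p ab(1) assms(1) subspace_diff by blast
    moreover have "fst p - a \<in> B"
      unfolding diff using p ab(2) assms(2) subspace_diff by blast
    ultimately have "fst p - a = 0" by (rule assms(3))
    with diff show "p = (a, b)" by (simp add: prod_eq_iff)
  qed (use ab in simp)
qed

end

locale inner_product_space = vector_space smul
  for smul :: "'k::real_field \<Rightarrow> 'v::ab_group_add \<Rightarrow> 'v" +
  fixes cnj' :: "'k \<Rightarrow> 'k" and g :: "'v \<Rightarrow> 'v \<Rightarrow> 'k"
  assumes inner_product: "inner_product smul cnj' g"
    and cnj_add: "cnj' (a + b) = cnj' a + cnj' b"
    and cnj_mult: "cnj' (a * b) = cnj' a * cnj' b"
begin

lemma inner_add_left: "g (u + v) w = g u w + g v w"
  and inner_scale_left: "g (smul a u) v = a * g u v"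
  and inner_commute: "g v u = cnj' (g u v)"
  using inner_product unfolding inner_product_def by blast+

lemma inner_self_eq_zero: "g v v = 0 \<Longrightarrow> v = 0"
proof (rule ccontr)
  assume "g v v = 0" "v \<noteq> 0"
  then obtain r :: real where "r > 0" "g v v = of_real r"
    using inner_product unfolding inner_product_def by blast
  with \<open>g v v = 0\<close> show False by simp
qed

lemma cnj_zero: "cnj' 0 = 0"
  using cnj_add[of 0 0] by simp

lemma inner_add_right: "g u (v + w) = g u v + g u w"
  by (simp only: inner_commute[of u] inner_add_left cnj_add)

lemma inner_scale_right: "g u (smul a v) = cnj' a * g u v"
  by (simp only: inner_commute[of u] inner_scale_left cnj_mult)

lemma inner_zero_left [simp]: "g 0 v = 0"
  using inner_add_left[of 0 0 v] by simp

lemma inner_zero_right [simp]: "g v 0 = 0"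
  using inner_add_right[of v 0 0] by simp

lemma inner_eq_zero_commute: "g u v = 0 \<longleftrightarrow> g v u = 0"
  using inner_commute[of u v] inner_commute[of v u] cnj_zero by auto

lemma inner_diff_left: "g (u - w) v = g u v - g w v"
  using inner_add_left[of "u - w" w v] by (simp add: eq_diff_eq)

lemma inner_sum_left: "g (sum h F) v = (\<Sum>i\<in>F. g (h i) v)"
  by (induction F rule: infinite_finite_induct) (auto simp: inner_add_left)

lemma inner_span_left_eq_zero:
  assumes "u \<in> span S" and "\<And>s. s \<in> S \<Longrightarrow> g s v = 0"
  shows "g u v = 0"
  using assms
proof (induction rule: span_induct)
  case base
  show ?case unfolding subspace_def by (auto simp: inner_add_left inner_scale_left)
qed auto

lemma inner_diff_projection: "g (v - smul (g v u / g u u) u) u = 0"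
proof (cases "u = 0")
  case False
  then have "g u u \<noteq> 0" using inner_self_eq_zero by blast
  then show ?thesis by (simp add: inner_diff_left inner_scale_left)
qed simp

lemma subspace_perp_in: "subspace W \<Longrightarrow> subspace (perp_in g W U)"
  unfolding subspace_def perp_in_def by (auto simp: inner_add_right inner_scale_right)

lemma perp_in_subset: "perp_in g W U \<subseteq> W"
  unfolding perp_in_def by blast

lemma perp_in_span: "perp_in g W (span S) = perp_in g W S"
  unfolding perp_in_def using span_superset inner_span_left_eq_zero by blast

lemma perp_in_inter_eq_zero: "x \<in> U \<Longrightarrow> x \<in> perp_in g W U \<Longrightarrow> x = 0"
  unfolding perp_in_def using inner_self_eq_zero by blast

lemma exists_orthogonal_decomposition_span:
  assumes "subspace W" "finite S" "S \<subseteq> W" "v \<in> W"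
  shows "\<exists>p\<in>span S. v - p \<in> perp_in g W S"
  using assms(2-4)
proof (induction S arbitrary: v rule: finite_induct)
  case empty
  then show ?case by (simp add: perp_in_def span_zero)
next
  case (insert s S)
  obtain ps where ps: "ps \<in> span S" "s - ps \<in> perp_in g W S"
    using insert.IH insert.prems(1) by blast
  obtain p where p: "p \<in> span S" "v - p \<in> perp_in g W S"
    using insert.IH insert.prems by blast
  define qs where "qs = s - ps"
  define p' where "p' = p + smul (g (v - p) qs / g qs qs) qs"
  have perp_S: "subspace (perp_in g W S)"
    using subspace_perp_in[OF assms(1)] .
  have q': "v - p' = (v - p) - smul (g (v - p) qs / g qs qs) qs"
    unfolding p'_def by (simp add: algebra_simps)
  \<comment> \<open>Gram-Schmidt step: \<open>qs \<perp> S\<close>, and removing from \<open>v - p\<close> its component along \<open>qs\<close>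
    makes it orthogonal to \<open>s = ps + qs\<close> as well.\<close>
  have "g (v - p') qs = 0"
    unfolding q' by (rule inner_diff_projection)
  then have q'_qs: "g qs (v - p') = 0"
    using inner_eq_zero_commute by blast
  have "v - p' \<in> perp_in g W S"
    unfolding q' using subspace_diff[OF perp_S p(2) subspace_scale[OF perp_S ps(2)[folded qs_def]]] .
  then have "g ps (v - p') = 0"
    using inner_span_left_eq_zero[OF ps(1)] unfolding perp_in_def by blast
  then have "g s (v - p') = 0"
    using q'_qs unfolding qs_def inner_diff_left by simp
  then have "v - p' \<in> perp_in g W (insert s S)"
    using \<open>v - p' \<in> perp_in g W S\<close> unfolding perp_in_def by blast
  moreover have "p' \<in> span (insert s S)"
  proof -
    have S_sub: "span S \<subseteq> span (insert s S)" by (rule span_mono) blast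
    have "qs \<in> span (insert s S)"
      unfolding qs_def using span_diff[OF span_base[of s] subsetD[OF S_sub ps(1)]] by simp
    then show ?thesis
      unfolding p'_def using span_add[OF subsetD[OF S_sub p(1)] span_scale] by blast
  qed
  ultimately show ?case by blast
qed

lemma direct_sum2_perp_span:
  assumes "subspace W" "finite S" "S \<subseteq> W"
  shows "direct_sum2 W (span S) (perp_in g W (span S))"
proof (rule direct_sum2I)
  show "subspace (perp_in g W (span S))" using subspace_perp_in assms(1) .
  show "\<And>x. x \<in> span S \<Longrightarrow> x \<in> perp_in g W (span S) \<Longrightarrow> x = 0"
    using perp_in_inter_eq_zero .
  show "\<exists>a\<in>span S. \<exists>b\<in>perp_in g W (span S). v = a + b" if v: "v \<in> W" for v
  proof -
    obtain p where "p \<in> span S" "v - p \<in> perp_in g W (span S)"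
      using exists_orthogonal_decomposition_span[OF assms v] unfolding perp_in_span by blast
    then show ?thesis by force
  qed
qed simp

lemma direct_sum2_perp_finite_dim:
  assumes "subspace W" "subspace U" "U \<subseteq> W" "finite B" "U \<subseteq> span B"
  shows "direct_sum2 W U (perp_in g W U)"
proof -
  obtain S where S: "S \<subseteq> U" "independent S" "U \<subseteq> span S"
    by (rule basis_exists)
  have "finite S"
    using independent_span_bound[OF assms(4) S(2)] S(1) assms(5) by (meson order_trans)
  moreover have "U = span S"
    using S(3) span_minimal[OF S(1) assms(2)] by (rule antisym)
  ultimately show ?thesis
    using direct_sum2_perp_span[OF assms(1), of S] S(1) assms(3) by simp
qed

end

locale inner_product_space_operator = inner_product_space smul cnj' g
  for smul :: "'k::real_field \<Rightarrow> 'v::ab_group_add \<Rightarrow> 'v" and cnj' g +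
  fixes f :: "'v \<Rightarrow> 'v"
  assumes linear_f: "Vector_Spaces.linear smul smul f"
begin

sublocale f: Vector_Spaces.linear smul smul f
  by (fact linear_f)

definition min_norm_lsq :: "'v set \<Rightarrow> 'v \<Rightarrow> 'v" where
  "min_norm_lsq W v = (if v \<in> W
     then THE x. x \<in> perp_in g W {u \<in> W. f u = 0} \<and> v - f x \<in> perp_in g W (f ` W)
     else 0)"

lemma lsq_solution_unique:
  assumes W: "subspace W"
    and x: "x \<in> perp_in g W {u \<in> W. f u = 0}" "v - f x \<in> perp_in g W (f ` W)"
    and x': "x' \<in> perp_in g W {u \<in> W. f u = 0}" "v - f x' \<in> perp_in g W (f ` W)"
  shows "x = x'"
proof -
  have kernel_perp: "subspace (perp_in g W {u \<in> W. f u = 0})"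
    using subspace_perp_in[OF W] .
  have "x \<in> W" "x' \<in> W"
    using x(1) x'(1) perp_in_subset by blast+
  then have "x - x' \<in> W"
    using subspace_diff[OF W] by blast
  have "f (x - x') = (v - f x') - (v - f x)"
    by (simp add: f.diff)
  also have "\<dots> \<in> perp_in g W (f ` W)"
    using subspace_diff[OF subspace_perp_in[OF W] x'(2) x(2)] .
  finally have "f (x - x') = 0"
    using perp_in_inter_eq_zero[OF imageI[OF \<open>x - x' \<in> W\<close>]] by blast
  then have "x - x' \<in> {u \<in> W. f u = 0}"
    using \<open>x - x' \<in> W\<close> by simp
  moreover have "x - x' \<in> perp_in g W {u \<in> W. f u = 0}"
    using subspace_diff[OF kernel_perp x(1) x'(1)] .
  ultimately have "x - x' = 0"
    by (rule perp_in_inter_eq_zero)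
  then show "x = x'" by simp
qed

lemma lsq_solution_exists:
  assumes adm: "admissible_on g W f" and v: "v \<in> W"
  shows "\<exists>x\<in>perp_in g W {u \<in> W. f u = 0}. v - f x \<in> perp_in g W (f ` W)"
proof -
  obtain m n where mn: "m \<in> f ` W" "n \<in> perp_in g W (f ` W)" "v = m + n"
    using adm v unfolding admissible_on_def by (elim conjE direct_sum2E)
  then obtain w where w: "w \<in> W" "m = f w" by blast
  obtain k p where kp: "k \<in> {u \<in> W. f u = 0}" "p \<in> perp_in g W {u \<in> W. f u = 0}" "w = k + p"
    using adm w(1) unfolding admissible_on_def by (elim conjE direct_sum2E)
  have "v - f p = n"
    using mn(3) w(2) kp(1,3) by (simp add: f.add)
  with kp(2) mn(2) show ?thesis by blast
qed

lemma min_norm_lsq_eqI: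
  assumes W: "subspace W" and v: "v \<in> W"
    and x: "x \<in> perp_in g W {u \<in> W. f u = 0}" "v - f x \<in> perp_in g W (f ` W)"
  shows "min_norm_lsq W v = x"
proof -
  have "(THE x. x \<in> perp_in g W {u \<in> W. f u = 0} \<and> v - f x \<in> perp_in g W (f ` W)) = x"
    using x lsq_solution_unique[OF W] by (intro the_equality) blast+
  with v show ?thesis
    unfolding min_norm_lsq_def by simp
qed

lemma min_norm_lsq_mem:
  assumes W: "subspace W" and adm: "admissible_on g W f" and v: "v \<in> W"
  shows "min_norm_lsq W v \<in> perp_in g W {u \<in> W. f u = 0}"
    and "v - f (min_norm_lsq W v) \<in> perp_in g W (f ` W)"
proof -
  obtain x where "x \<in> perp_in g W {u \<in> W. f u = 0}" "v - f x \<in> perp_in g W (f ` W)"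
    using lsq_solution_exists[OF adm v] by blast
  moreover from this have "min_norm_lsq W v = x"
    by (rule min_norm_lsq_eqI[OF W v])
  ultimately show "min_norm_lsq W v \<in> perp_in g W {u \<in> W. f u = 0}"
    and "v - f (min_norm_lsq W v) \<in> perp_in g W (f ` W)"
    by simp_all
qed

lemma linear_on_min_norm_lsq:
  assumes W: "subspace W" and adm: "admissible_on g W f"
  shows "linear_on smul W (min_norm_lsq W)"
  unfolding linear_on_def
proof (intro conjI ballI allI)
  let ?F = "min_norm_lsq W"
  have kernel_perp: "subspace (perp_in g W {u \<in> W. f u = 0})"
    and image_perp: "subspace (perp_in g W (f ` W))"
    using subspace_perp_in[OF W] by blast+
  note mem = min_norm_lsq_mem[OF W adm]
  {
    fix x y assume "x \<in> W" "y \<in> W"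
    have "(x + y) - f (?F x + ?F y) = (x - f (?F x)) + (y - f (?F y))"
      by (simp add: f.add algebra_simps)
    also have "\<dots> \<in> perp_in g W (f ` W)"
      using subspace_add[OF image_perp mem(2) mem(2)] \<open>x \<in> W\<close> \<open>y \<in> W\<close> .
    finally show "?F (x + y) = ?F x + ?F y"
      using subspace_add[OF W \<open>x \<in> W\<close> \<open>y \<in> W\<close>]
        subspace_add[OF kernel_perp mem(1)[OF \<open>x \<in> W\<close>] mem(1)[OF \<open>y \<in> W\<close>]]
      by (intro min_norm_lsq_eqI[OF W])
  next
    fix a x assume "x \<in> W"
    have "smul a x - f (smul a (?F x)) = smul a (x - f (?F x))"
      by (simp add: f.scale scale_right_diff_distrib)
    also have "\<dots> \<in> perp_in g W (f ` W)"
      using subspace_scale[OF image_perp mem(2)[OF \<open>x \<in> W\<close>]] .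
    finally show "?F (smul a x) = smul a (?F x)"
      using subspace_scale[OF W \<open>x \<in> W\<close>] subspace_scale[OF kernel_perp mem(1)[OF \<open>x \<in> W\<close>]]
      by (intro min_norm_lsq_eqI[OF W])
  }
qed

lemma is_MP_inverse_on_min_norm_lsq:
  assumes W: "subspace W" and invariant: "f ` W \<subseteq> W" and adm: "admissible_on g W f"
  shows "is_MP_inverse_on smul g W f (min_norm_lsq W)"
proof -
  let ?F = "min_norm_lsq W"
  note mem = min_norm_lsq_mem[OF W adm]
  have "?F y \<in> perp_in g W {u \<in> W. f u = 0} \<and> f (?F y) = y" if y: "y \<in> f ` W" for y
  proof
    have "y \<in> W" using y invariant by blast
    show Fy: "?F y \<in> perp_in g W {u \<in> W. f u = 0}"
      using mem(1)[OF \<open>y \<in> W\<close>] .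
    then have "?F y \<in> W"
      using perp_in_subset by blast
    then have "y - f (?F y) \<in> f ` W"
      using subspace_diff[OF f.subspace_image[OF W] y] by blast
    then have "y - f (?F y) = 0"
      using mem(2)[OF \<open>y \<in> W\<close>] by (rule perp_in_inter_eq_zero)
    then show "f (?F y) = y" by simp
  qed
  moreover have "?F y = 0" if y: "y \<in> perp_in g W (f ` W)" for y
  proof -
    have "y \<in> W" using y perp_in_subset by blast
    then show ?thesis
      using subspace_0[OF subspace_perp_in[OF W]] y
      by (intro min_norm_lsq_eqI[OF W]) (simp_all add: f.zero)
  qed
  moreover have "?F ` W \<subseteq> W"
    using mem(1) perp_in_subset by blast
  ultimately show ?thesis
    unfolding is_MP_inverse_on_def using adm linear_on_min_norm_lsq[OF W adm] by blast
qed

lemma is_MP_inverse_on_components: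
  assumes W: "subspace W" and F: "is_MP_inverse_on smul g W f F" and v: "v \<in> W"
  shows "F v \<in> perp_in g W {u \<in> W. f u = 0}" and "v - f (F v) \<in> perp_in g W (f ` W)"
proof -
  have adm: "admissible_on g W f" and lin: "linear_on smul W F"
    using F unfolding is_MP_inverse_on_def by blast+
  obtain m n where mn: "m \<in> f ` W" "n \<in> perp_in g W (f ` W)" "v = m + n"
    using adm v unfolding admissible_on_def by (elim conjE direct_sum2E)
  have "n \<in> W"
    using mn(2) perp_in_subset by blast
  moreover from this have "m \<in> W"
    using subspace_diff[OF W v] mn(3) by force
  ultimately have "F v = F m + F n"
    using lin mn(3) unfolding linear_on_def by blast
  also have "F n = 0"
    using F mn(2) unfolding is_MP_inverse_on_def by blast
  finally have "F v = F m" by simp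
  moreover have "F m \<in> perp_in g W {u \<in> W. f u = 0}" and "f (F m) = m"
    using F mn(1) unfolding is_MP_inverse_on_def by blast+
  ultimately show "F v \<in> perp_in g W {u \<in> W. f u = 0}" and "v - f (F v) \<in> perp_in g W (f ` W)"
    using mn(2,3) by simp_all
qed

lemma MP_inv_eq_min_norm_lsq:
  assumes W: "subspace W" and invariant: "f ` W \<subseteq> W" and adm: "admissible_on g W f"
  shows "MP_inv smul g W f = min_norm_lsq W"
  unfolding MP_inv_def
proof (rule the_equality)
  show "is_MP_inverse_on smul g W f (min_norm_lsq W) \<and> (\<forall>v. v \<notin> W \<longrightarrow> min_norm_lsq W v = 0)"
    using is_MP_inverse_on_min_norm_lsq[OF assms] by (simp add: min_norm_lsq_def)
next
  fix F assume F: "is_MP_inverse_on smul g W f F \<and> (\<forall>v. v \<notin> W \<longrightarrow> F v = 0)"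
  show "F = min_norm_lsq W"
  proof
    fix v show "F v = min_norm_lsq W v"
    proof (cases "v \<in> W")
      case True
      then show ?thesis
        using F is_MP_inverse_on_components[OF W _ True] min_norm_lsq_eqI[OF W True] by metis
    next
      case False
      then show ?thesis
        using F by (simp add: min_norm_lsq_def)
    qed
  qed
qed

lemma is_MP_inverse_on_MP_inv:
  assumes "subspace W" "f ` W \<subseteq> W" "admissible_on g W f"
  shows "is_MP_inverse_on smul g W f (MP_inv smul g W f)"
  using is_MP_inverse_on_min_norm_lsq[OF assms] by (simp add: MP_inv_eq_min_norm_lsq[OF assms])

lemma MP_inv_eqI:
  assumes "subspace W" "f ` W \<subseteq> W" "admissible_on g W f" and "v \<in> W"
    and "x \<in> perp_in g W {u \<in> W. f u = 0}" "v - f x \<in> perp_in g W (f ` W)"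
  shows "MP_inv smul g W f v = x"
  using min_norm_lsq_eqI[OF assms(1,4-6)] by (simp add: MP_inv_eq_min_norm_lsq[OF assms(1-3)])


end

locale orthogonal_invariant_decomposition = inner_product_space_operator smul cnj' g f
  for smul :: "'k::real_field \<Rightarrow> 'v::ab_group_add \<Rightarrow> 'v" and cnj' g f +
  fixes I :: "'i set" and H :: "'i \<Rightarrow> 'v set"
  assumes finite_dim: "i \<in> I \<Longrightarrow> fin_dim_subspace smul (H i)"
    and invariant: "i \<in> I \<Longrightarrow> f ` H i \<subseteq> H i"
    and direct: "internal_direct_sum I H"
    and orthogonal: "i \<in> I \<Longrightarrow> H i \<subseteq> perp_in g UNIV (subspace_sum (I - {i}) H)"
begin

lemma subspace_component: "i \<in> I \<Longrightarrow> subspace (H i)"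
  using finite_dim unfolding fin_dim_subspace_def by (metis subspace_span)

lemma mem_subspace_sum_components: "v \<in> subspace_sum I H"
proof -
  obtain h where h: "\<forall>i\<in>I. h i \<in> H i" "\<forall>i. i \<notin> I \<longrightarrow> h i = 0"
    "finite {i. h i \<noteq> 0}" "v = sum h {i. h i \<noteq> 0}"
    using ex1_implies_ex[OF direct[unfolded internal_direct_sum_def, rule_format, of v]] by blast
  have "{i. h i \<noteq> 0} \<subseteq> I"
    using h(2) by blast
  then show ?thesis
    unfolding h(4) using h(1,3) by (intro subspace_sumI) auto
qed

lemma inner_components_orthogonal:
  assumes "i \<in> I" "j \<in> I" "i \<noteq> j" "x \<in> H i" "y \<in> H j"
  shows "g y x = 0"
proof -
  have "sum (\<lambda>_. y) {j} \<in> subspace_sum (I - {i}) H"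
    using assms(2,3,5) by (intro subspace_sumI) auto
  then show ?thesis
    using orthogonal[OF assms(1)] assms(4) unfolding perp_in_def by auto
qed

lemma inner_sum_component:
  assumes "finite G" "G \<subseteq> I" "\<And>j. j \<in> G \<Longrightarrow> w j \<in> H j" "i \<in> I" "x \<in> H i"
  shows "g (sum w G) x = (if i \<in> G then g (w i) x else 0)"
proof -
  have "g (w j) x = (if j = i then g (w i) x else 0)" if "j \<in> G" for j
    using inner_components_orthogonal[OF assms(4) _ _ assms(5) assms(3)[OF that]] assms(2) that
    by auto
  then have "g (sum w G) x = (\<Sum>j\<in>G. if j = i then g (w i) x else 0)"
    unfolding inner_sum_left by (rule sum.cong[OF refl])
  also have "\<dots> = (if i \<in> G then g (w i) x else 0)"
    using assms(1) by (simp add: sum.delta')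
  finally show ?thesis .
qed

lemma sum_components_eq_zero:
  assumes "finite G" "G \<subseteq> I" "\<And>j. j \<in> G \<Longrightarrow> w j \<in> H j" "sum w G = 0" "i \<in> G"
  shows "w i = 0"
proof -
  have "g (w i) (w i) = g (sum w G) (w i)"
    using inner_sum_component[OF assms(1-3), of i "w i"] assms(2,3,5) by auto
  then show ?thesis
    using assms(4) by (simp add: inner_self_eq_zero)
qed

lemma kernel_eq_subspace_sum: "{v. f v = 0} = subspace_sum I (\<lambda>i. {v \<in> H i. f v = 0})"
proof
  show "{v. f v = 0} \<subseteq> subspace_sum I (\<lambda>i. {v \<in> H i. f v = 0})"
  proof
    fix v assume "v \<in> {v. f v = 0}"
    obtain G h where Gh: "finite G" "G \<subseteq> I" "\<And>j. j \<in> G \<Longrightarrow> h j \<in> H j" "v = sum h G"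
      by (rule subspace_sumE[OF mem_subspace_sum_components[of v]]) auto
    have "(\<Sum>j\<in>G. f (h j)) = 0"
      using \<open>v \<in> {v. f v = 0}\<close> Gh(4) by (simp add: f.sum)
    moreover have "f (h j) \<in> H j" if "j \<in> G" for j
      using Gh(2,3) invariant that by blast
    ultimately have "f (h j) = 0" if "j \<in> G" for j
      using sum_components_eq_zero[OF Gh(1,2), of "\<lambda>j. f (h j)"] that by blast
    then show "v \<in> subspace_sum I (\<lambda>i. {v \<in> H i. f v = 0})"
      unfolding Gh(4) using Gh(1-3) by (intro subspace_sumI) auto
  qed
  show "subspace_sum I (\<lambda>i. {v \<in> H i. f v = 0}) \<subseteq> {v. f v = 0}"
    by (auto elim!: subspace_sumE simp: f.sum)
qed

lemma range_eq_subspace_sum: "range f = subspace_sum I (\<lambda>i. f ` H i)"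
proof
  show "range f \<subseteq> subspace_sum I (\<lambda>i. f ` H i)"
  proof
    fix y assume "y \<in> range f"
    then obtain v where "y = f v" by blast
    obtain G h where Gh: "finite G" "G \<subseteq> I" "\<And>j. j \<in> G \<Longrightarrow> h j \<in> H j" "v = sum h G"
      by (rule subspace_sumE[OF mem_subspace_sum_components[of v]]) auto
    have "y = (\<Sum>j\<in>G. f (h j))"
      using \<open>y = f v\<close> Gh(4) by (simp add: f.sum)
    then show "y \<in> subspace_sum I (\<lambda>i. f ` H i)"
      using Gh(1-3) by (auto intro: subspace_sumI)
  qed
  show "subspace_sum I (\<lambda>i. f ` H i) \<subseteq> range f"
    by (auto elim!: subspace_sumE intro!: subspace_sum[OF f.subspace_image[OF subspace_UNIV]])
qed


lemma perp_in_component_subset: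
  assumes "\<And>j. j \<in> I \<Longrightarrow> P j \<subseteq> H j" and "i \<in> I"
  shows "perp_in g (H i) (P i) \<subseteq> perp_in g UNIV (subspace_sum I P)"
proof
  fix q assume q: "q \<in> perp_in g (H i) (P i)"
  have "g u q = 0" if u: "u \<in> subspace_sum I P" for u
  proof -
    obtain G w where Gw: "finite G" "G \<subseteq> I" "\<And>j. j \<in> G \<Longrightarrow> w j \<in> P j" "u = sum w G"
      by (rule subspace_sumE[OF u]) auto
    have "\<And>j. j \<in> G \<Longrightarrow> w j \<in> H j"
      using Gw(2,3) assms(1) by blast
    moreover have "q \<in> H i"
      using q perp_in_subset by blast
    ultimately have "g u q = (if i \<in> G then g (w i) q else 0)"
      unfolding Gw(4) using inner_sum_component[OF Gw(1,2) _ assms(2)] by blast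
    also have "\<dots> = 0"
      using q Gw(3) unfolding perp_in_def by simp
    finally show ?thesis .
  qed
  then show "q \<in> perp_in g UNIV (subspace_sum I P)"
    unfolding perp_in_def by blast
qed

lemma direct_sum2_perp_subspace_sum:
  assumes sub: "\<And>j. j \<in> I \<Longrightarrow> P j \<subseteq> H j"
    and subspace: "subspace (subspace_sum I P)"
    and local: "\<And>i. i \<in> I \<Longrightarrow> direct_sum2 (H i) (P i) (perp_in g (H i) (P i))"
  shows "direct_sum2 UNIV (subspace_sum I P) (perp_in g UNIV (subspace_sum I P))"
proof (rule direct_sum2I[OF subspace subspace_perp_in[OF subspace_UNIV] perp_in_inter_eq_zero])
  fix v :: 'v
  obtain G h where Gh: "finite G" "G \<subseteq> I" "\<And>j. j \<in> G \<Longrightarrow> h j \<in> H j" "v = sum h G"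
    by (rule subspace_sumE[OF mem_subspace_sum_components[of v]]) auto
  have "\<exists>p q. p \<in> P i \<and> q \<in> perp_in g (H i) (P i) \<and> h i = p + q" if "i \<in> G" for i
    using local[of i] Gh(2,3) that by (blast elim: direct_sum2E)
  then obtain p q where pq: "\<And>i. i \<in> G \<Longrightarrow> p i \<in> P i"
      "\<And>i. i \<in> G \<Longrightarrow> q i \<in> perp_in g (H i) (P i)" "\<And>i. i \<in> G \<Longrightarrow> h i = p i + q i"
    by metis
  have "v = sum p G + sum q G"
    unfolding Gh(4) sum.distrib[symmetric] using pq(3) by (rule sum.cong[OF refl])
  moreover have "sum p G \<in> subspace_sum I P"
    using Gh(1,2) pq(1) by (rule subspace_sumI)
  moreover have "sum q G \<in> perp_in g UNIV (subspace_sum I P)"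
    using perp_in_component_subset[OF sub] pq(2) Gh(2)
    by (intro subspace_sum[OF subspace_perp_in[OF subspace_UNIV]]) blast
  ultimately show "\<exists>a\<in>subspace_sum I P. \<exists>b\<in>perp_in g UNIV (subspace_sum I P). v = a + b"
    by blast
qed

lemma admissible_on_component:
  assumes i: "i \<in> I"
  shows "admissible_on g (H i) f"
proof -
  obtain B where B: "finite B" "H i = span B"
    using finite_dim[OF i] unfolding fin_dim_subspace_def by blast
  have "subspace {v \<in> H i. f v = 0}"
    using subspace_inter[OF subspace_component[OF i] f.subspace_kernel] by (simp add: Int_def)
  then have "direct_sum2 (H i) {v \<in> H i. f v = 0} (perp_in g (H i) {v \<in> H i. f v = 0})"
    using B by (intro direct_sum2_perp_finite_dim[OF subspace_component[OF i]]) auto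
  moreover have "direct_sum2 (H i) (f ` H i) (perp_in g (H i) (f ` H i))"
    using B invariant[OF i] f.subspace_image[OF subspace_component[OF i]]
    by (intro direct_sum2_perp_finite_dim[OF subspace_component[OF i]]) auto
  ultimately show ?thesis
    unfolding admissible_on_def by blast
qed

lemma admissible_on_UNIV: "admissible_on g UNIV f"
proof -
  have "direct_sum2 UNIV {v. f v = 0} (perp_in g UNIV {v. f v = 0})"
    unfolding kernel_eq_subspace_sum
  proof (rule direct_sum2_perp_subspace_sum)
    show "subspace (subspace_sum I (\<lambda>i. {v \<in> H i. f v = 0}))"
      using f.subspace_kernel unfolding kernel_eq_subspace_sum .
    show "direct_sum2 (H i) {v \<in> H i. f v = 0} (perp_in g (H i) {v \<in> H i. f v = 0})"
      if "i \<in> I" for i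
      using admissible_on_component[OF that] unfolding admissible_on_def by blast
  qed blast
  moreover have "direct_sum2 UNIV (range f) (perp_in g UNIV (range f))"
    unfolding range_eq_subspace_sum
  proof (rule direct_sum2_perp_subspace_sum)
    show "subspace (subspace_sum I (\<lambda>i. f ` H i))"
      using f.subspace_image[OF subspace_UNIV] unfolding range_eq_subspace_sum .
    show "direct_sum2 (H i) (f ` H i) (perp_in g (H i) (f ` H i))" if "i \<in> I" for i
      using admissible_on_component[OF that] unfolding admissible_on_def by blast
  qed (rule invariant)
  ultimately show ?thesis
    unfolding admissible_on_def by simp
qed

lemma linear_on_eq_on_components:
  assumes "linear_on smul UNIV F1" "linear_on smul UNIV F2"
    and "\<And>i x. i \<in> I \<Longrightarrow> x \<in> H i \<Longrightarrow> F1 x = F2 x"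
  shows "F1 = F2"
proof
  fix v
  interpret F1: Vector_Spaces.linear smul smul F1
    using assms(1) linear_on_UNIV_iff by blast
  interpret F2: Vector_Spaces.linear smul smul F2
    using assms(2) linear_on_UNIV_iff by blast
  obtain G h where Gh: "finite G" "G \<subseteq> I" "\<And>j. j \<in> G \<Longrightarrow> h j \<in> H j" "v = sum h G"
    by (rule subspace_sumE[OF mem_subspace_sum_components[of v]]) auto
  have "F1 (h j) = F2 (h j)" if "j \<in> G" for j
    using assms(3) Gh(2,3) that by blast
  then show "F1 v = F2 v"
    unfolding Gh(4) F1.sum F2.sum by (rule sum.cong[OF refl])
qed

lemma MP_inv_UNIV_on_component:
  assumes i: "i \<in> I" and x: "x \<in> H i"
  shows "MP_inv smul g UNIV f x = MP_inv smul g (H i) f x"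
proof (rule MP_inv_eqI[OF subspace_UNIV _ admissible_on_UNIV UNIV_I])
  have "is_MP_inverse_on smul g (H i) f (MP_inv smul g (H i) f)"
    using is_MP_inverse_on_MP_inv[OF subspace_component[OF i] invariant[OF i]
        admissible_on_component[OF i]] .
  note local = is_MP_inverse_on_components[OF subspace_component[OF i] this x]
  have "perp_in g (H i) {v \<in> H i. f v = 0} \<subseteq> perp_in g UNIV {u \<in> UNIV. f u = 0}"
    using perp_in_component_subset[of "\<lambda>j. {v \<in> H j. f v = 0}", OF _ i]
    unfolding kernel_eq_subspace_sum[symmetric] by simp
  with local(1) show "MP_inv smul g (H i) f x \<in> perp_in g UNIV {u \<in> UNIV. f u = 0}"
    by blast
  have "perp_in g (H i) (f ` H i) \<subseteq> perp_in g UNIV (f ` UNIV)"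
    using perp_in_component_subset[of "\<lambda>j. f ` H j", OF invariant i]
    unfolding range_eq_subspace_sum[symmetric] .
  with local(2) show "x - f (MP_inv smul g (H i) f x) \<in> perp_in g UNIV (f ` UNIV)"
    by blast
qed simp

lemma MP_plus_eq_MP_inv: "MP_plus smul g I H f = MP_inv smul g UNIV f"
  unfolding MP_plus_def
proof (rule the_equality)
  have "is_MP_inverse_on smul g UNIV f (MP_inv smul g UNIV f)"
    using is_MP_inverse_on_MP_inv[OF subspace_UNIV _ admissible_on_UNIV] by simp
  then have linear: "linear_on smul UNIV (MP_inv smul g UNIV f)"
    unfolding is_MP_inverse_on_def by blast
  then show "linear_on smul UNIV (MP_inv smul g UNIV f) \<and>
      (\<forall>i\<in>I. \<forall>x\<in>H i. MP_inv smul g UNIV f x = MP_inv smul g (H i) f x)"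
    using MP_inv_UNIV_on_component by blast
  fix F assume F: "linear_on smul UNIV F \<and> (\<forall>i\<in>I. \<forall>x\<in>H i. F x = MP_inv smul g (H i) f x)"
  show "F = MP_inv smul g UNIV f"
  proof (rule linear_on_eq_on_components[OF _ linear])
    show "linear_on smul UNIV F" using F by blast
    show "F x = MP_inv smul g UNIV f x" if "i \<in> I" "x \<in> H i" for i x
      using F MP_inv_UNIV_on_component[OF that] that by simp
  qed
qed

lemma cor_concl_holds: "cor_concl smul g f I H"
  unfolding cor_concl_def using admissible_on_UNIV MP_plus_eq_MP_inv by blast

end

lemma cor_hyps_imp_cor_concl:
  fixes smul :: "'k::real_field \<Rightarrow> 'v::ab_group_add \<Rightarrow> 'v" and cnj' :: "'k \<Rightarrow> 'k"
  assumes "\<And>a b. cnj' (a + b) = cnj' a + cnj' b" and "\<And>a b. cnj' (a * b) = cnj' a * cnj' b"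
    and hyps: "cor_hyps smul cnj' g f I H"
  shows "cor_concl smul g f I H"
proof -
  have inner: "inner_product smul cnj' g"
    using hyps unfolding cor_hyps_def by blast
  then have vs: "vector_space smul"
    unfolding inner_product_def by blast
  have "Vector_Spaces.linear smul smul f"
    using hyps vector_space.linear_on_UNIV_iff[OF vs] unfolding cor_hyps_def by blast
  then interpret orthogonal_invariant_decomposition smul cnj' g f I H
    using vs inner assms(1,2) hyps
    unfolding orthogonal_invariant_decomposition_def orthogonal_invariant_decomposition_axioms_def
      inner_product_space_operator_def inner_product_space_operator_axioms_def
      inner_product_space_def inner_product_space_axioms_def cor_hyps_def
    by blast
  show ?thesis
    by (fact cor_concl_holds)
qed

theorem corollary3p21:
  shows "(\<forall>(smul :: real \<Rightarrow> 'v::ab_group_add \<Rightarrow> 'v) g f (I :: 'i set) H.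
            cor_hyps smul (\<lambda>x. x) g f I H \<longrightarrow> cor_concl smul g f I H) \<and>
         (\<forall>(smul :: complex \<Rightarrow> 'w::ab_group_add \<Rightarrow> 'w) g f (I :: 'j set) H.
            cor_hyps smul cnj g f I H \<longrightarrow> cor_concl smul g f I H)"
proof (intro conjI allI impI)
  show "cor_concl smul g f I H" if "cor_hyps smul (\<lambda>x. x) g f I H"
    for smul :: "real \<Rightarrow> 'v \<Rightarrow> 'v" and g f and I :: "'i set" and H
    using that by (rule cor_hyps_imp_cor_concl[rotated 2]) simp_all
  show "cor_concl smul g f I H" if "cor_hyps smul cnj g f I H"
    for smul :: "complex \<Rightarrow> 'w \<Rightarrow> 'w" and g f and I :: "'j set" and H
    using that by (rule cor_hyps_imp_cor_concl[rotated 2]) simp_all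
qed

end
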